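(* Let $A=\{A_m\}_{m=1}^{\mathsf{p}}\subset\mathcal{B}(\mathbb{C}^{D_1})$ and $B=\{B_m\}_{m=1}^{\mathsf{p}}\subset\mathcal{B}(\mathbb{C}^{D_2})$, and let $E_1=\sum_m\overline{A_m}\otimes A_m$, $E_2=\sum_m\overline{B_m}\otimes B_m$. Let $\psi_1\in \mathbb{C}^{D_1}$ and $\psi_2\in\mathbb{C}^{D_2}$ be unit vectors. Then for all $d\ge1$ and all $F\in\mathcal{B}((\mathbb{C}^{\mathsf{p}})^{\otimes d})$, \[ \|(E_F)^{\dagger} (\psi_1\otimes\psi_2)\| \leq \|F\| \sqrt{\|E_1^d\|\,\|E_2^d\|},\qquad \|E_F (\psi_1\otimes\psi_2)\| \leq \|F\| \sqrt{\|E_1^d\|\,\|E_2^d\|}, \] \[ \|E_F\|_F \leq D_1D_2 \|F\| \sqrt{\|E_1^d\|\,\|E_2^d\|}. \]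
   Context: For $Z\in\mathcal{B}(\mathbb{C}^\mathsf{p})$ define $E_Z=\sum_{m,m'=1}^{\mathsf{p}}\langle m|Z|m'\rangle\,\overline{A_m}\otimes B_{m'}\in\mathcal{B}(\mathbb{C}^{D_1}\otimes\mathbb{C}^{D_2})$ (overline denotes entrywise complex conjugation in the standard basis), and for $Z_1,\dots,Z_d\in\mathcal{B}(\mathbb{C}^\mathsf{p})$ set $E_{Z_1\otimes\cdots\otimes Z_d}=E_{Z_1}E_{Z_2}\cdots E_{Z_d}$; extend linearly to define $E_F$ for all $F\in\mathcal{B}((\mathbb{C}^\mathsf{p})^{\otimes d})$. $\|\cdot\|$ denotes the operator norm (Euclidean norm for vectors) and $\|\cdot\|_F$ the Frobenius norm. *)

theory Defs
  imports Complex_Main "Jordan_Normal_Form.Matrix" "Jordan_Normal_Form.Schur_Decomposition"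
begin

definition vnorm :: "complex vec \<Rightarrow> real" where
  "vnorm v = sqrt (\<Sum>i<dim_vec v. (cmod (v $ i))\<^sup>2)"

definition opnorm :: "complex mat \<Rightarrow> real" where
  "opnorm M = Sup {vnorm (M *\<^sub>v v) | v. v \<in> carrier_vec (dim_col M) \<and> vnorm v \<le> 1}"

definition frob :: "complex mat \<Rightarrow> real" where
  "frob M = sqrt (\<Sum>i<dim_row M. \<Sum>j<dim_col M. (cmod (M $$ (i,j)))\<^sup>2)"

definition conj_mat :: "complex mat \<Rightarrow> complex mat" where
  "conj_mat M = map_mat cnj M"

(* Kronecker (tensor) product, standard ordering: first factor most significant *)
definition kron :: "complex mat \<Rightarrow> complex mat \<Rightarrow> complex mat" where
  "kron M N = mat (dim_row M * dim_row N) (dim_col M * dim_col N)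
     (\<lambda>(i,j). M $$ (i div dim_row N, j div dim_col N) * N $$ (i mod dim_row N, j mod dim_col N))"

definition kron_vec :: "complex vec \<Rightarrow> complex vec \<Rightarrow> complex vec" where
  "kron_vec v w = vec (dim_vec v * dim_vec w) (\<lambda>i. v $ (i div dim_vec w) * w $ (i mod dim_vec w))"

(* E_Z = sum_{m,m'} <m|Z|m'> conj(A_m) (x) B_{m'}; indices m are 0-based: 0..p-1 *)
definition E_Z :: "nat \<Rightarrow> nat \<Rightarrow> nat \<Rightarrow> (nat \<Rightarrow> complex mat) \<Rightarrow> (nat \<Rightarrow> complex mat)
                   \<Rightarrow> complex mat \<Rightarrow> complex mat" where
  "E_Z D1 D2 p A B Z = mat (D1*D2) (D1*D2)
     (\<lambda>(i,j). \<Sum>m<p. \<Sum>m'<p. Z $$ (m,m') * kron (conj_mat (A m)) (B m') $$ (i,j))"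

(* E_{Z_1 (x) ... (x) Z_d} = E_{Z_1} ... E_{Z_d} *)
definition E_list :: "nat \<Rightarrow> nat \<Rightarrow> nat \<Rightarrow> (nat \<Rightarrow> complex mat) \<Rightarrow> (nat \<Rightarrow> complex mat)
                   \<Rightarrow> complex mat list \<Rightarrow> complex mat" where
  "E_list D1 D2 p A B Zs = foldr (\<lambda>Z M. E_Z D1 D2 p A B Z * M) Zs (1\<^sub>m (D1*D2))"

definition unit_mat :: "nat \<Rightarrow> nat \<Rightarrow> nat \<Rightarrow> complex mat" where
  "unit_mat p a b = mat p p (\<lambda>(i,j). if i = a \<and> j = b then 1 else 0)"

(* k-th tensor factor index (0-based, k < d) of basis index a < p^d of (C^p)^{(x)d},
   consistent with the Kronecker ordering (first factor most significant) *)
definition digit :: "nat \<Rightarrow> nat \<Rightarrow> nat \<Rightarrow> nat \<Rightarrow> nat" where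
  "digit p d k a = (a div p ^ (d - 1 - k)) mod p"

(* E_F by linear extension: F = sum_{a,b} F_{ab} |a><b| and
   |a><b| = (x)_k |a_k><b_k| *)
definition E_F :: "nat \<Rightarrow> nat \<Rightarrow> nat \<Rightarrow> nat \<Rightarrow> (nat \<Rightarrow> complex mat) \<Rightarrow> (nat \<Rightarrow> complex mat)
                   \<Rightarrow> complex mat \<Rightarrow> complex mat" where
  "E_F D1 D2 p d A B F = mat (D1*D2) (D1*D2)
     (\<lambda>(i,j). \<Sum>a<p^d. \<Sum>b<p^d. F $$ (a,b) *
        E_list D1 D2 p A B (map (\<lambda>k. unit_mat p (digit p d k a) (digit p d k b)) [0..<d]) $$ (i,j))"

definition transfer :: "nat \<Rightarrow> nat \<Rightarrow> (nat \<Rightarrow> complex mat) \<Rightarrow> complex mat" where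
  "transfer D p A = mat (D*D) (D*D) (\<lambda>(i,j). \<Sum>m<p. kron (conj_mat (A m)) (A m) $$ (i,j))"

end

theory Submission
  imports Defs "HOL-Analysis.L2_Norm"
begin

(* Write A_a for the word A_{a_1} ... A_{a_d} indexed by the base-p digits of a. Then
   E_F = \<Sum>_{a,b} F_{ab} conj(A_a) \<otimes> B_b and E_1^d = \<Sum>_a conj(A_a) \<otimes> A_a.
   Applied to \<psi>1 \<otimes> \<psi>2, E_F yields the coefficient array U^T F W of the vectors u_a = conj(A_a) \<psi>1
   and w_b = B_b \<psi>2. Its squared norm is the Frobenius pairing of the Gram matrix G of the u_a with
   conj(F) K F^T, K the Gram matrix of the w_b, hence by Cauchy--Schwarz at most \<parallel>F\<parallel>^2 \<parallel>G\<parallel>_F \<parallel>K\<parallel>_F.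
   Finally \<parallel>G\<parallel>_F is the norm of \<Sum>_a u_a \<otimes> conj(u_a) = E_1^d (\<psi>1 \<otimes> conj \<psi>1), which is at most
   \<parallel>E_1^d\<parallel>, and likewise for K. The adjoint of E_F has the same shape, with the words replaced by their
   adjoints and F by conj(F); the Frobenius bound follows from the bound on the basis vectors e_i \<otimes> e_j. *)

lemma cmod_sum_mult_le:
  "cmod (\<Sum>i\<in>I. f i * g i) \<le> sqrt (\<Sum>i\<in>I. (cmod (f i))\<^sup>2) * sqrt (\<Sum>i\<in>I. (cmod (g i))\<^sup>2)"
proof -
  have "cmod (\<Sum>i\<in>I. f i * g i) \<le> (\<Sum>i\<in>I. \<bar>cmod (f i)\<bar> * \<bar>cmod (g i)\<bar>)"
    using norm_sum[of "\<lambda>i. f i * g i" I] by (simp add: norm_mult)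
  also have "\<dots> \<le> L2_set (\<lambda>i. cmod (f i)) I * L2_set (\<lambda>i. cmod (g i)) I"
    by (rule L2_set_mult_ineq)
  finally show ?thesis unfolding L2_set_def by simp
qed

lemma cmod_double_sum_mult_le:
  "cmod (\<Sum>a\<in>A. \<Sum>b\<in>B. f a b * g a b)
     \<le> sqrt (\<Sum>a\<in>A. \<Sum>b\<in>B. (cmod (f a b))\<^sup>2) * sqrt (\<Sum>a\<in>A. \<Sum>b\<in>B. (cmod (g a b))\<^sup>2)"
  using cmod_sum_mult_le[of "\<lambda>x. f (fst x) (snd x)" "\<lambda>x. g (fst x) (snd x)" "A \<times> B"]
  by (simp add: sum.cartesian_product split_def)

lemma divmod_less: "(i :: nat) < n1 * n2 \<Longrightarrow> i div n2 < n1 \<and> i mod n2 < n2"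
  by (metis less_mult_imp_div_less mod_less_divisor mult_zero_right not_gr_zero not_less_zero)

lemma sum_divmod:
  "(\<Sum>i<n1 * n2. h (i div n2) (i mod n2)) = (\<Sum>a<n1. \<Sum>b<(n2::nat). h a b)"
proof -
  have "(\<Sum>i<n1 * n2. h (i div n2) (i mod n2)) = (\<Sum>a<n1. \<Sum>i\<in>{a*n2..<a*n2+n2}. h (i div n2) (i mod n2))"
    by (rule sum.nat_group[symmetric])
  also have "\<dots> = (\<Sum>a<n1. \<Sum>b<n2. h ((a*n2+b) div n2) ((a*n2+b) mod n2))"
  proof (rule sum.cong[OF refl])
    fix a
    show "(\<Sum>i\<in>{a*n2..<a*n2+n2}. h (i div n2) (i mod n2)) = (\<Sum>b<n2. h ((a*n2+b) div n2) ((a*n2+b) mod n2))"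
      using sum.shift_bounds_nat_ivl[of "\<lambda>i. h (i div n2) (i mod n2)" 0 "a*n2" n2]
      by (simp add: lessThan_atLeast0 add.commute)
  qed
  finally show ?thesis by simp
qed

lemma sum_lessThan_times: "(\<Sum>s\<in>{..<N} \<times> {..<M}. g s) = (\<Sum>a<N * M. g (a div M, a mod M))" for N M :: nat
  using sum_divmod[of "\<lambda>a b. g (a, b)" M N] by (simp add: sum.cartesian_product)

lemma index_mult_mat_vec_sum:
  "M \<in> carrier_mat n m \<Longrightarrow> v \<in> carrier_vec m \<Longrightarrow> i < n \<Longrightarrow> (M *\<^sub>v v) $ i = (\<Sum>k<m. M $$ (i,k) * v $ k)"
  by (auto simp: scalar_prod_def lessThan_atLeast0 intro!: sum.cong)

lemma index_mult_mat_sum: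
  "M \<in> carrier_mat n m \<Longrightarrow> N \<in> carrier_mat m l \<Longrightarrow> i < n \<Longrightarrow> j < l \<Longrightarrow>
   (M * N) $$ (i,j) = (\<Sum>k<m. M $$ (i,k) * N $$ (k,j))"
  by (auto simp: scalar_prod_def lessThan_atLeast0 intro!: sum.cong)

lemma index_mult_unit_vec:
  fixes M :: "complex mat"
  assumes M: "M \<in> carrier_mat n n" and i: "i < n" and j: "j < n"
  shows "(M *\<^sub>v unit_vec n j) $ i = M $$ (i,j)"
proof -
  have "(M *\<^sub>v unit_vec n j) $ i = (\<Sum>k<n. M $$ (i,k) * unit_vec n j $ k)"
    by (rule index_mult_mat_vec_sum[OF M unit_vec_carrier i])
  also have "\<dots> = (\<Sum>k<n. if k = j then M $$ (i,k) else 0)"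
    by (rule sum.cong) (use j in auto)
  finally
  show ?thesis using j by simp
qed

lemma vnorm_nonneg: "vnorm v \<ge> 0"
  unfolding vnorm_def by (simp add: sum_nonneg)

lemma vnorm_sq: "(vnorm v)\<^sup>2 = (\<Sum>i<dim_vec v. (cmod (v $ i))\<^sup>2)"
  unfolding vnorm_def by (simp add: sum_nonneg)

lemma vnorm_smult: "vnorm (c \<cdot>\<^sub>v v) = cmod c * vnorm v"
  unfolding vnorm_def
  by (simp add: norm_mult power_mult_distrib sum_distrib_left[symmetric] real_sqrt_mult)

lemma vnorm_conjugate: "vnorm (conjugate v) = vnorm v"
  unfolding vnorm_def by simp

lemma vnorm_eq_0_imp_zero: "v \<in> carrier_vec n \<Longrightarrow> vnorm v = 0 \<Longrightarrow> v = 0\<^sub>v n"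
  unfolding vnorm_def by (intro eq_vecI) (auto simp: sum_nonneg_eq_0_iff)

lemma vnorm_unit_vec: "vnorm (unit_vec n j) = 1" if "j < n"
proof -
  have "(\<Sum>i<n. (cmod (unit_vec n j $ i))\<^sup>2) = (\<Sum>i<n. if i = j then 1 else 0)"
    by (intro sum.cong) (auto simp: unit_vec_def)
  then show ?thesis
    using that unfolding vnorm_def by simp
qed

lemma vnorm_vec_divmod_sq:
  "(vnorm (vec (n1 * n2) (\<lambda>k. f (k div n2) (k mod n2))))\<^sup>2 = (\<Sum>a<n1. \<Sum>b<n2. (cmod (f a b))\<^sup>2)"
  unfolding vnorm_sq by (simp add: sum_divmod[where h="\<lambda>a b. (cmod (f a b))\<^sup>2"])

lemma frob_nonneg: "frob M \<ge> 0"
  unfolding frob_def by (simp add: sum_nonneg)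

lemma vnorm_mult_vec_le_frob:
  assumes M: "M \<in> carrier_mat n m" and v: "v \<in> carrier_vec m"
  shows "vnorm (M *\<^sub>v v) \<le> frob M * vnorm v"
proof (rule power2_le_imp_le)
  have "(vnorm (M *\<^sub>v v))\<^sup>2 = (\<Sum>i<n. (cmod (\<Sum>k<m. M $$ (i,k) * v $ k))\<^sup>2)"
    using M v by (simp add: vnorm_sq index_mult_mat_vec_sum[OF M v] del: index_mult_mat_vec)
  also have "\<dots> \<le> (\<Sum>i<n. (sqrt (\<Sum>k<m. (cmod (M $$ (i,k)))\<^sup>2) * sqrt (\<Sum>k<m. (cmod (v $ k))\<^sup>2))\<^sup>2)"
    by (intro sum_mono power_mono cmod_sum_mult_le norm_ge_zero)
  also have "\<dots> = (frob M * vnorm v)\<^sup>2"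
    using M v unfolding frob_def vnorm_def
    by (simp add: power_mult_distrib sum_distrib_right sum_nonneg)
  finally show "(vnorm (M *\<^sub>v v))\<^sup>2 \<le> (frob M * vnorm v)\<^sup>2" .
qed (simp add: frob_nonneg vnorm_nonneg)

lemma vnorm_mult_vec_le_opnorm_of_unit:
  assumes "v \<in> carrier_vec (dim_col M)" "vnorm v \<le> 1"
  shows "vnorm (M *\<^sub>v v) \<le> opnorm M"
  unfolding opnorm_def
proof (rule cSup_upper)
  show "bdd_above {vnorm (M *\<^sub>v v) |v. v \<in> carrier_vec (dim_col M) \<and> vnorm v \<le> 1}"
  proof (rule bdd_aboveI, clarify)
    fix w assume w: "w \<in> carrier_vec (dim_col M)" "vnorm w \<le> 1"
    have "vnorm (M *\<^sub>v w) \<le> frob M * vnorm w"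
      using w by (intro vnorm_mult_vec_le_frob) auto
    also have "\<dots> \<le> frob M"
      using w frob_nonneg[of M] by (simp add: mult_left_le)
    finally show "vnorm (M *\<^sub>v w) \<le> frob M" .
  qed
qed (use assms in auto)

lemma opnorm_nonneg: "opnorm M \<ge> 0"
  using vnorm_mult_vec_le_opnorm_of_unit[of "0\<^sub>v (dim_col M)" M] by (simp add: vnorm_def)

lemma vnorm_mult_vec_le_opnorm:
  assumes v: "v \<in> carrier_vec (dim_col M)"
  shows "vnorm (M *\<^sub>v v) \<le> opnorm M * vnorm v"
proof (cases "vnorm v = 0")
  case True
  then show ?thesis
    using vnorm_eq_0_imp_zero[OF v] by (simp add: vnorm_def)
next
  case False
  define c where "c = vnorm v"
  have c: "c > 0" using False vnorm_nonneg[of v] unfolding c_def by simp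
  have "M *\<^sub>v (complex_of_real (1 / c) \<cdot>\<^sub>v v) = complex_of_real (1 / c) \<cdot>\<^sub>v (M *\<^sub>v v)"
    using v by (intro mult_mat_vec) auto
  moreover have "vnorm (M *\<^sub>v (complex_of_real (1 / c) \<cdot>\<^sub>v v)) \<le> opnorm M"
    using v c by (intro vnorm_mult_vec_le_opnorm_of_unit) (auto simp: vnorm_smult c_def norm_divide)
  ultimately show ?thesis
    using c by (simp add: vnorm_smult norm_divide c_def[symmetric] field_simps)
qed

lemma sum_cmod_sq_mult_le_opnorm:
  assumes F: "F \<in> carrier_mat N N"
  shows "(\<Sum>a<N. (cmod (\<Sum>k<N. F $$ (a,k) * f k))\<^sup>2) \<le> (opnorm F)\<^sup>2 * (\<Sum>k<N. (cmod (f k))\<^sup>2)"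
proof -
  have v: "vec N f \<in> carrier_vec (dim_col F)" using F by simp
  have "(vnorm (F *\<^sub>v vec N f))\<^sup>2 \<le> (opnorm F * vnorm (vec N f))\<^sup>2"
    by (intro power_mono vnorm_mult_vec_le_opnorm[OF v] vnorm_nonneg)
  then show ?thesis
    using F by (simp add: vnorm_sq power_mult_distrib index_mult_mat_vec_sum[OF F] del: index_mult_mat_vec)
qed

lemma conj_mat_carrier: "X \<in> carrier_mat n m \<Longrightarrow> conj_mat X \<in> carrier_mat n m"
  unfolding conj_mat_def by auto

lemma index_conj_mat: "i < dim_row X \<Longrightarrow> j < dim_col X \<Longrightarrow> conj_mat X $$ (i,j) = cnj (X $$ (i,j))"
  unfolding conj_mat_def by auto

lemma conj_mat_conj_mat [simp]: "conj_mat (conj_mat X) = X"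
  unfolding conj_mat_def by (intro eq_matI) auto

lemma conj_mat_one: "conj_mat (1\<^sub>m n) = 1\<^sub>m n"
  unfolding conj_mat_def by (intro eq_matI) auto

lemma conj_mat_mult:
  assumes X: "X \<in> carrier_mat n m" and Y: "Y \<in> carrier_mat m l"
  shows "conj_mat (X * Y) = conj_mat X * conj_mat Y"
proof (rule eq_matI)
  fix i j assume "i < dim_row (conj_mat X * conj_mat Y)" "j < dim_col (conj_mat X * conj_mat Y)"
  then have i: "i < n" and j: "j < l" using X Y by (auto simp: conj_mat_def)
  show "conj_mat (X * Y) $$ (i,j) = (conj_mat X * conj_mat Y) $$ (i,j)"
    using i j X Y conj_mat_carrier[OF X] conj_mat_carrier[OF Y]
    by (simp add: index_conj_mat index_mult_mat_sum[OF X Y i j]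
        index_mult_mat_sum[OF conj_mat_carrier[OF X] conj_mat_carrier[OF Y] i j])
qed (use X Y in \<open>auto simp: conj_mat_def\<close>)

lemma conj_mat_mult_vec_conjugate:
  assumes X: "X \<in> carrier_mat n m" and v: "v \<in> carrier_vec m"
  shows "conj_mat X *\<^sub>v conjugate v = conjugate (X *\<^sub>v v)"
proof (rule eq_vecI)
  fix i assume "i < dim_vec (conjugate (X *\<^sub>v v))"
  then have i: "i < n" using X by simp
  show "(conj_mat X *\<^sub>v conjugate v) $ i = conjugate (X *\<^sub>v v) $ i"
    using i X v
    by (simp add: index_mult_mat_vec_sum[OF conj_mat_carrier[OF X] _ i] index_mult_mat_vec_sum[OF X v i]
        index_conj_mat del: index_mult_mat_vec)
qed (use X in \<open>simp add: conj_mat_def\<close>)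

lemma mat_adjoint_eq: "M \<in> carrier_mat n m \<Longrightarrow> mat_adjoint M = mat m n (\<lambda>(i,j). cnj (M $$ (j,i)))"
  unfolding mat_adjoint_def mat_of_rows_def by (intro eq_matI) auto

lemma mat_adjoint_carrier: "(M :: complex mat) \<in> carrier_mat n m \<Longrightarrow> mat_adjoint M \<in> carrier_mat m n"
  by (simp add: mat_adjoint_eq)

lemma conj_mat_adjoint: "conj_mat (mat_adjoint M) = mat_adjoint (conj_mat (M :: complex mat))"
  using mat_adjoint_eq[of M "dim_row M" "dim_col M"] mat_adjoint_eq[of "conj_mat M" "dim_row M" "dim_col M"]
  by (intro eq_matI) (auto simp: conj_mat_def)

lemma vnorm_adjoint_mult_vec_le_opnorm:
  assumes M: "M \<in> carrier_mat n n" and y: "y \<in> carrier_vec n"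
  shows "vnorm (mat_adjoint M *\<^sub>v y) \<le> opnorm M * vnorm y"
proof -
  define z where "z = mat_adjoint M *\<^sub>v y"
  have z: "z \<in> carrier_vec n"
    unfolding z_def using mat_adjoint_carrier[OF M] y by auto
  have zi: "z $ i = (\<Sum>j<n. cnj (M $$ (j,i)) * y $ j)" if "i < n" for i
    unfolding z_def using index_mult_mat_vec_sum[OF mat_adjoint_carrier[OF M] y that] that
    by (simp add: mat_adjoint_eq[OF M])
  \<comment> \<open>\<open>\<parallel>z\<parallel>\<^sup>2 = \<langle>y, M z\<rangle>\<close>, then Cauchy--Schwarz\<close>
  have "complex_of_real ((vnorm z)\<^sup>2) = (\<Sum>i<n. z $ i * cnj (z $ i))"
    unfolding vnorm_sq of_real_sum complex_norm_square using z by simp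
  also have "\<dots> = (\<Sum>i<n. \<Sum>j<n. cnj (M $$ (j,i)) * y $ j * cnj (z $ i))"
    by (intro sum.cong refl) (auto simp: zi sum_distrib_right)
  also have "\<dots> = (\<Sum>j<n. y $ j * cnj ((M *\<^sub>v z) $ j))"
    by (subst sum.swap) (simp add: index_mult_mat_vec_sum[OF M z] sum_distrib_left mult_ac
        del: index_mult_mat_vec)
  finally have "(vnorm z)\<^sup>2 = cmod (\<Sum>j<n. y $ j * cnj ((M *\<^sub>v z) $ j))"
    by (metis norm_of_real abs_of_nonneg zero_le_power2)
  also have "\<dots> \<le> vnorm y * vnorm (M *\<^sub>v z)"
    using cmod_sum_mult_le[of "\<lambda>j. y $ j" "\<lambda>j. cnj ((M *\<^sub>v z) $ j)" "{..<n}"] y M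
    by (simp add: vnorm_def)
  also have "\<dots> \<le> vnorm y * (opnorm M * vnorm z)"
    using z M by (intro mult_left_mono vnorm_mult_vec_le_opnorm vnorm_nonneg) auto
  finally have "vnorm z * vnorm z \<le> (opnorm M * vnorm y) * vnorm z"
    by (simp add: power2_eq_square mult_ac)
  then show ?thesis
    unfolding z_def[symmetric]
    by (metis mult_right_le_imp_le le_less mult_nonneg_nonneg vnorm_nonneg opnorm_nonneg)
qed

lemma opnorm_conj_mat_le: "opnorm (conj_mat F) \<le> opnorm F"
  unfolding opnorm_def[of "conj_mat F"]
proof (rule cSup_least)
  show "{vnorm (conj_mat F *\<^sub>v v) |v. v \<in> carrier_vec (dim_col (conj_mat F)) \<and> vnorm v \<le> 1} \<noteq> {}"
    by (auto intro!: exI[of _ "0\<^sub>v (dim_col (conj_mat F))"] simp: vnorm_def)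
next
  fix r assume "r \<in> {vnorm (conj_mat F *\<^sub>v v) |v. v \<in> carrier_vec (dim_col (conj_mat F)) \<and> vnorm v \<le> 1}"
  then obtain v where v: "v \<in> carrier_vec (dim_col F)" "vnorm v \<le> 1" and r: "r = vnorm (conj_mat F *\<^sub>v v)"
    by (auto simp: conj_mat_def)
  have "conj_mat F *\<^sub>v v = conjugate (F *\<^sub>v conjugate v)"
    using conj_mat_mult_vec_conjugate[of F "dim_row F" "dim_col F" "conjugate v"] v by simp
  then show "r \<le> opnorm F"
    using v by (simp add: r vnorm_conjugate vnorm_mult_vec_le_opnorm_of_unit)
qed

lemma opnorm_conj_mat: "opnorm (conj_mat F) = opnorm F"
  using opnorm_conj_mat_le[of F] opnorm_conj_mat_le[of "conj_mat F"] by simp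

subsection \<open>Kronecker products\<close>

lemma kron_carrier: "X \<in> carrier_mat n1 n1 \<Longrightarrow> Y \<in> carrier_mat n2 n2 \<Longrightarrow> kron X Y \<in> carrier_mat (n1 * n2) (n1 * n2)"
  unfolding kron_def by auto

lemma index_kron:
  "X \<in> carrier_mat n1 n1 \<Longrightarrow> Y \<in> carrier_mat n2 n2 \<Longrightarrow> i < n1 * n2 \<Longrightarrow> j < n1 * n2 \<Longrightarrow>
   kron X Y $$ (i,j) = X $$ (i div n2, j div n2) * Y $$ (i mod n2, j mod n2)"
  unfolding kron_def by auto

lemma kron_mult:
  assumes X: "X \<in> carrier_mat n1 n1" "X' \<in> carrier_mat n1 n1"
    and Y: "Y \<in> carrier_mat n2 n2" "Y' \<in> carrier_mat n2 n2"
  shows "kron X Y * kron X' Y' = kron (X * X') (Y * Y')"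
proof (rule eq_matI)
  fix i j assume "i < dim_row (kron (X * X') (Y * Y'))" "j < dim_col (kron (X * X') (Y * Y'))"
  then have i: "i < n1 * n2" and j: "j < n1 * n2" using X Y by (auto simp: kron_def)
  have "(kron X Y * kron X' Y') $$ (i,j) = (\<Sum>k<n1 * n2. kron X Y $$ (i,k) * kron X' Y' $$ (k,j))"
    using X Y by (intro index_mult_mat_sum[OF kron_carrier kron_carrier i j])
  also have "\<dots> = (\<Sum>k<n1 * n2. (X $$ (i div n2, k div n2) * Y $$ (i mod n2, k mod n2)) *
      (X' $$ (k div n2, j div n2) * Y' $$ (k mod n2, j mod n2)))"
    by (intro sum.cong refl) (simp add: index_kron[OF X(1) Y(1) i] index_kron[OF X(2) Y(2) _ j])
  also have "\<dots> = (\<Sum>a<n1. \<Sum>b<n2. (X $$ (i div n2, a) * Y $$ (i mod n2, b)) *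
      (X' $$ (a, j div n2) * Y' $$ (b, j mod n2)))"
    by (rule sum_divmod)
  also have "\<dots> = (X * X') $$ (i div n2, j div n2) * (Y * Y') $$ (i mod n2, j mod n2)"
    using divmod_less[OF i] divmod_less[OF j]
    by (simp add: index_mult_mat_sum[OF X] index_mult_mat_sum[OF Y] sum_product mult_ac)
  finally show "(kron X Y * kron X' Y') $$ (i,j) = kron (X * X') (Y * Y') $$ (i,j)"
    using X Y i j by (simp add: index_kron[of _ n1 _ n2])
qed (use X Y in \<open>auto simp: kron_def\<close>)

lemma kron_one: "kron (1\<^sub>m n1) (1\<^sub>m n2) = 1\<^sub>m (n1 * n2)"
proof (rule eq_matI)
  fix i j assume "i < dim_row (1\<^sub>m (n1 * n2))" "j < dim_col (1\<^sub>m (n1 * n2))"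
  then have i: "i < n1 * n2" and j: "j < n1 * n2" by auto
  have "(i div n2 = j div n2 \<and> i mod n2 = j mod n2) = (i = j)"
    by (metis div_mult_mod_eq)
  then show "kron (1\<^sub>m n1) (1\<^sub>m n2) $$ (i,j) = 1\<^sub>m (n1 * n2) $$ (i,j)"
    using divmod_less[OF i] divmod_less[OF j] i j by (auto simp: index_kron[of _ n1 _ n2])
qed (auto simp: kron_def)

lemma kron_vec_carrier: "kron_vec x y \<in> carrier_vec (n1 * n2)" if "x \<in> carrier_vec n1" "y \<in> carrier_vec n2"
  using that unfolding kron_vec_def by auto

lemma index_kron_vec:
  "x \<in> carrier_vec n1 \<Longrightarrow> y \<in> carrier_vec n2 \<Longrightarrow> k < n1 * n2 \<Longrightarrow> kron_vec x y $ k = x $ (k div n2) * y $ (k mod n2)"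
  unfolding kron_vec_def by auto

lemma vnorm_kron_vec:
  assumes x: "x \<in> carrier_vec n1" and y: "y \<in> carrier_vec n2"
  shows "vnorm (kron_vec x y) = vnorm x * vnorm y"
proof -
  have "(vnorm (kron_vec x y))\<^sup>2 = (\<Sum>a<n1. \<Sum>b<n2. (cmod (x $ a * y $ b))\<^sup>2)"
    using x y vnorm_vec_divmod_sq[of n1 n2 "\<lambda>a b. x $ a * y $ b"] unfolding kron_vec_def by simp
  also have "\<dots> = (vnorm x * vnorm y)\<^sup>2"
    using x y by (simp add: vnorm_sq power_mult_distrib norm_mult sum_product)
  finally show ?thesis
    by (simp add: vnorm_nonneg power2_eq_iff_nonneg)
qed

lemma unit_vec_eq_kron_vec:
  assumes j: "j < n1 * n2"
  shows "unit_vec (n1 * n2) j = kron_vec (unit_vec n1 (j div n2)) (unit_vec n2 (j mod n2))"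
proof (rule eq_vecI)
  fix i assume "i < dim_vec (kron_vec (unit_vec n1 (j div n2)) (unit_vec n2 (j mod n2)))"
  then have i: "i < n1 * n2" by (simp add: kron_vec_def)
  have "(i div n2 = j div n2 \<and> i mod n2 = j mod n2) = (i = j)"
    by (metis div_mult_mod_eq)
  then show "unit_vec (n1 * n2) j $ i = kron_vec (unit_vec n1 (j div n2)) (unit_vec n2 (j mod n2)) $ i"
    using i j divmod_less[OF i] divmod_less[OF j] by (auto simp: kron_vec_def)
qed (simp add: kron_vec_def)

lemma kron_mult_kron_vec:
  assumes X: "X \<in> carrier_mat n1 n1" and Y: "Y \<in> carrier_mat n2 n2"
    and x: "x \<in> carrier_vec n1" and y: "y \<in> carrier_vec n2"
  shows "kron X Y *\<^sub>v kron_vec x y = kron_vec (X *\<^sub>v x) (Y *\<^sub>v y)"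
proof (rule eq_vecI)
  fix i assume "i < dim_vec (kron_vec (X *\<^sub>v x) (Y *\<^sub>v y))"
  then have i: "i < n1 * n2" using X Y by (simp add: kron_vec_def)
  have "(kron X Y *\<^sub>v kron_vec x y) $ i
      = (\<Sum>k<n1 * n2. (X $$ (i div n2, k div n2) * x $ (k div n2)) * (Y $$ (i mod n2, k mod n2) * y $ (k mod n2)))"
    using index_mult_mat_vec_sum[OF kron_carrier[OF X Y] kron_vec_carrier[OF x y] i]
    by (simp add: index_kron[OF X Y i] index_kron_vec[OF x y] mult_ac)
  also have "\<dots> = (\<Sum>a<n1. X $$ (i div n2, a) * x $ a) * (\<Sum>b<n2. Y $$ (i mod n2, b) * y $ b)"
    by (simp add: sum_divmod[where h="\<lambda>a b. (X $$ (i div n2, a) * x $ a) * (Y $$ (i mod n2, b) * y $ b)"]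
        sum_product)
  finally show "(kron X Y *\<^sub>v kron_vec x y) $ i = kron_vec (X *\<^sub>v x) (Y *\<^sub>v y) $ i"
    using i X Y x y divmod_less[OF i]
    by (simp add: index_kron_vec[of _ n1 _ n2] index_mult_mat_vec_sum[of _ n1 n1] index_mult_mat_vec_sum[of _ n2 n2]
        del: index_mult_mat_vec)
qed (use X Y x y in \<open>simp add: kron_def kron_vec_def\<close>)

(* \<Sum>s\<in>S. c s \<cdot> X s \<otimes> Y s, written entrywise because matrices of varying dimension form no monoid *)
definition kron_sum :: "nat \<Rightarrow> nat \<Rightarrow> 's set \<Rightarrow> ('s \<Rightarrow> complex) \<Rightarrow> ('s \<Rightarrow> complex mat) \<Rightarrow> ('s \<Rightarrow> complex mat)
                        \<Rightarrow> complex mat" where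
  "kron_sum n1 n2 S c X Y = mat (n1 * n2) (n1 * n2) (\<lambda>(i,j). \<Sum>s\<in>S. c s * kron (X s) (Y s) $$ (i,j))"

lemma kron_sum_carrier: "kron_sum n1 n2 S c X Y \<in> carrier_mat (n1 * n2) (n1 * n2)"
  unfolding kron_sum_def by simp

lemma dim_kron_sum [simp]:
  "dim_row (kron_sum n1 n2 S c X Y) = n1 * n2" "dim_col (kron_sum n1 n2 S c X Y) = n1 * n2"
  unfolding kron_sum_def by simp_all

lemma kron_sum_cong:
  assumes "\<And>s. s \<in> S \<Longrightarrow> c s = c' s" "\<And>s. s \<in> S \<Longrightarrow> X s = X' s" "\<And>s. s \<in> S \<Longrightarrow> Y s = Y' s"
  shows "kron_sum n1 n2 S c X Y = kron_sum n1 n2 S c' X' Y'"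
  unfolding kron_sum_def using assms by (intro cong_mat refl sum.cong) auto

lemma kron_sum_mult_kron_vec:
  assumes X: "\<And>s. s \<in> S \<Longrightarrow> X s \<in> carrier_mat n1 n1" and Y: "\<And>s. s \<in> S \<Longrightarrow> Y s \<in> carrier_mat n2 n2"
    and x: "x \<in> carrier_vec n1" and y: "y \<in> carrier_vec n2"
  shows "kron_sum n1 n2 S c X Y *\<^sub>v kron_vec x y
    = vec (n1 * n2) (\<lambda>k. \<Sum>s\<in>S. c s * ((X s *\<^sub>v x) $ (k div n2) * (Y s *\<^sub>v y) $ (k mod n2)))"
proof (rule eq_vecI)
  fix i assume "i < dim_vec (vec (n1 * n2) (\<lambda>k. \<Sum>s\<in>S. c s * ((X s *\<^sub>v x) $ (k div n2) * (Y s *\<^sub>v y) $ (k mod n2))))"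
  then have i: "i < n1 * n2" by simp
  have "(kron_sum n1 n2 S c X Y *\<^sub>v kron_vec x y) $ i
      = (\<Sum>k<n1 * n2. \<Sum>s\<in>S. c s * (kron (X s) (Y s) $$ (i,k) * kron_vec x y $ k))"
    using i index_mult_mat_vec_sum[OF kron_sum_carrier kron_vec_carrier[OF x y] i]
    by (simp add: kron_sum_def sum_distrib_right mult.assoc)
  also have "\<dots> = (\<Sum>s\<in>S. c s * (\<Sum>k<n1 * n2. kron (X s) (Y s) $$ (i,k) * kron_vec x y $ k))"
    by (subst sum.swap) (simp add: sum_distrib_left)
  also have "\<dots> = (\<Sum>s\<in>S. c s * (kron (X s) (Y s) *\<^sub>v kron_vec x y) $ i)"
    using X Y x y i by (intro sum.cong refl)
      (simp add: index_mult_mat_vec_sum[OF kron_carrier kron_vec_carrier i] del: index_mult_mat_vec)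
  also have "\<dots> = (\<Sum>s\<in>S. c s * ((X s *\<^sub>v x) $ (i div n2) * (Y s *\<^sub>v y) $ (i mod n2)))"
  proof (intro sum.cong refl)
    fix s assume s: "s \<in> S"
    have "X s *\<^sub>v x \<in> carrier_vec n1" "Y s *\<^sub>v y \<in> carrier_vec n2"
      using X[OF s] Y[OF s] x y by auto
    then show "c s * (kron (X s) (Y s) *\<^sub>v kron_vec x y) $ i = c s * ((X s *\<^sub>v x) $ (i div n2) * (Y s *\<^sub>v y) $ (i mod n2))"
      by (simp add: kron_mult_kron_vec[OF X[OF s] Y[OF s] x y] index_kron_vec i del: index_mult_mat_vec)
  qed
  finally show "(kron_sum n1 n2 S c X Y *\<^sub>v kron_vec x y) $ i
      = vec (n1 * n2) (\<lambda>k. \<Sum>s\<in>S. c s * ((X s *\<^sub>v x) $ (k div n2) * (Y s *\<^sub>v y) $ (k mod n2))) $ i"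
    using i by simp
qed simp

lemma mat_adjoint_kron_sum:
  assumes X: "\<And>s. s \<in> S \<Longrightarrow> X s \<in> carrier_mat n1 n1" and Y: "\<And>s. s \<in> S \<Longrightarrow> Y s \<in> carrier_mat n2 n2"
  shows "mat_adjoint (kron_sum n1 n2 S c X Y)
    = kron_sum n1 n2 S (\<lambda>s. cnj (c s)) (\<lambda>s. mat_adjoint (X s)) (\<lambda>s. mat_adjoint (Y s))"
proof (rule eq_matI)
  fix i j assume "i < dim_row (kron_sum n1 n2 S (\<lambda>s. cnj (c s)) (\<lambda>s. mat_adjoint (X s)) (\<lambda>s. mat_adjoint (Y s)))"
    "j < dim_col (kron_sum n1 n2 S (\<lambda>s. cnj (c s)) (\<lambda>s. mat_adjoint (X s)) (\<lambda>s. mat_adjoint (Y s)))"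
  then have i: "i < n1 * n2" and j: "j < n1 * n2" by auto
  have "cnj (kron (X s) (Y s) $$ (j,i)) = kron (mat_adjoint (X s)) (mat_adjoint (Y s)) $$ (i,j)" if "s \<in> S" for s
    using X[OF that] Y[OF that] i j divmod_less[OF i] divmod_less[OF j]
    by (simp add: index_kron[of _ n1 _ n2] mat_adjoint_carrier mat_adjoint_eq)
  moreover have "mat_adjoint (kron_sum n1 n2 S c X Y) $$ (i,j) = cnj (kron_sum n1 n2 S c X Y $$ (j,i))"
    using i j by (simp add: mat_adjoint_eq[OF kron_sum_carrier])
  ultimately show "mat_adjoint (kron_sum n1 n2 S c X Y) $$ (i,j)
    = kron_sum n1 n2 S (\<lambda>s. cnj (c s)) (\<lambda>s. mat_adjoint (X s)) (\<lambda>s. mat_adjoint (Y s)) $$ (i,j)"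
    using i j by (simp add: kron_sum_def)
qed (auto simp: mat_adjoint_eq[OF kron_sum_carrier])

lemma kron_sum_mult:
  assumes X: "\<And>s. s \<in> S \<Longrightarrow> X s \<in> carrier_mat n1 n1" and Y: "\<And>s. s \<in> S \<Longrightarrow> Y s \<in> carrier_mat n2 n2"
    and X': "\<And>t. t \<in> T \<Longrightarrow> X' t \<in> carrier_mat n1 n1" and Y': "\<And>t. t \<in> T \<Longrightarrow> Y' t \<in> carrier_mat n2 n2"
  shows "kron_sum n1 n2 S c X Y * kron_sum n1 n2 T c' X' Y'
    = kron_sum n1 n2 (S \<times> T) (\<lambda>(s,t). c s * c' t) (\<lambda>(s,t). X s * X' t) (\<lambda>(s,t). Y s * Y' t)"
proof (rule eq_matI)
  fix i j assume "i < dim_row (kron_sum n1 n2 (S \<times> T) (\<lambda>(s,t). c s * c' t) (\<lambda>(s,t). X s * X' t) (\<lambda>(s,t). Y s * Y' t))"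
    "j < dim_col (kron_sum n1 n2 (S \<times> T) (\<lambda>(s,t). c s * c' t) (\<lambda>(s,t). X s * X' t) (\<lambda>(s,t). Y s * Y' t))"
  then have i: "i < n1 * n2" and j: "j < n1 * n2" by auto
  have "(kron_sum n1 n2 S c X Y * kron_sum n1 n2 T c' X' Y') $$ (i,j)
      = (\<Sum>k<n1 * n2. \<Sum>s\<in>S. \<Sum>t\<in>T. c s * c' t * (kron (X s) (Y s) $$ (i,k) * kron (X' t) (Y' t) $$ (k,j)))"
    unfolding index_mult_mat_sum[OF kron_sum_carrier kron_sum_carrier i j]
    by (intro sum.cong refl) (use i j in \<open>simp add: kron_sum_def sum_product mult_ac\<close>)
  also have "\<dots> = (\<Sum>s\<in>S. \<Sum>t\<in>T. \<Sum>k<n1 * n2. c s * c' t * (kron (X s) (Y s) $$ (i,k) * kron (X' t) (Y' t) $$ (k,j)))"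
    by (subst sum.swap) (intro sum.cong refl sum.swap)
  also have "\<dots> = (\<Sum>s\<in>S. \<Sum>t\<in>T. c s * c' t * (\<Sum>k<n1 * n2. kron (X s) (Y s) $$ (i,k) * kron (X' t) (Y' t) $$ (k,j)))"
    by (simp add: sum_distrib_left)
  also have "\<dots> = (\<Sum>s\<in>S. \<Sum>t\<in>T. c s * c' t * kron (X s * X' t) (Y s * Y' t) $$ (i,j))"
  proof (intro sum.cong refl)
    fix s t assume s: "s \<in> S" and t: "t \<in> T"
    have "(\<Sum>k<n1 * n2. kron (X s) (Y s) $$ (i,k) * kron (X' t) (Y' t) $$ (k,j)) = (kron (X s) (Y s) * kron (X' t) (Y' t)) $$ (i,j)"
      using X[OF s] Y[OF s] X'[OF t] Y'[OF t] by (intro index_mult_mat_sum[OF kron_carrier kron_carrier i j, symmetric])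
    then show "c s * c' t * (\<Sum>k<n1 * n2. kron (X s) (Y s) $$ (i,k) * kron (X' t) (Y' t) $$ (k,j))
      = c s * c' t * kron (X s * X' t) (Y s * Y' t) $$ (i,j)"
      by (simp add: kron_mult[OF X[OF s] X'[OF t] Y[OF s] Y'[OF t]])
  qed
  finally show "(kron_sum n1 n2 S c X Y * kron_sum n1 n2 T c' X' Y') $$ (i,j)
    = kron_sum n1 n2 (S \<times> T) (\<lambda>(s,t). c s * c' t) (\<lambda>(s,t). X s * X' t) (\<lambda>(s,t). Y s * Y' t) $$ (i,j)"
    using i j by (simp add: kron_sum_def sum.cartesian_product split_def)
qed auto

lemma kron_sum_lessThan_times:
  fixes N M :: nat
  shows "kron_sum n1 n2 ({..<N} \<times> {..<M}) c X Y
    = kron_sum n1 n2 {..<N * M} (\<lambda>a. c (a div M, a mod M)) (\<lambda>a. X (a div M, a mod M)) (\<lambda>a. Y (a div M, a mod M))"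
  unfolding kron_sum_def by (simp add: sum_lessThan_times)

subsection \<open>Words in the Kraus operators\<close>

lemma foldr_mult_carrier:
  "(\<forall>k\<in>set ks. g k \<in> carrier_mat n n) \<Longrightarrow> foldr (\<lambda>k M. g k * M) ks (1\<^sub>m n) \<in> carrier_mat n n"
  by (induction ks) auto

lemma foldr_mult_eq_mult:
  fixes X :: "complex mat"
  assumes "\<forall>k\<in>set ks. g k \<in> carrier_mat n n" and X: "X \<in> carrier_mat n m"
  shows "foldr (\<lambda>k M. g k * M) ks X = foldr (\<lambda>k M. g k * M) ks (1\<^sub>m n) * X"
  using assms(1)
proof (induction ks)
  case Nil
  then show ?case using X by simp
next
  case (Cons k ks)
  then show ?case
    using X foldr_mult_carrier[of ks g n] by (simp add: assoc_mult_mat[of _ n n _ n _ m])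
qed

lemma foldr_mult_kron:
  assumes "\<forall>k\<in>set ks. f k \<in> carrier_mat n1 n1 \<and> g k \<in> carrier_mat n2 n2"
  shows "foldr (\<lambda>k M. kron (f k) (g k) * M) ks (1\<^sub>m (n1 * n2))
    = kron (foldr (\<lambda>k M. f k * M) ks (1\<^sub>m n1)) (foldr (\<lambda>k M. g k * M) ks (1\<^sub>m n2))"
  using assms
proof (induction ks)
  case Nil
  then show ?case by (simp add: kron_one)
next
  case (Cons k ks)
  then show ?case
    using foldr_mult_carrier[of ks f n1] foldr_mult_carrier[of ks g n2]
    by (simp add: kron_mult[of "f k" n1 _ "g k" n2])
qed

lemma conj_mat_foldr_mult:
  "(\<forall>k\<in>set ks. g k \<in> carrier_mat n n) \<Longrightarrow>
   conj_mat (foldr (\<lambda>k M. g k * M) ks (1\<^sub>m n)) = foldr (\<lambda>k M. conj_mat (g k) * M) ks (1\<^sub>m n)"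
proof (induction ks)
  case Nil
  then show ?case by (simp add: conj_mat_one)
next
  case (Cons k ks)
  then show ?case
    using foldr_mult_carrier[of ks g n] by (simp add: conj_mat_mult[of _ n n _ n])
qed

lemma digit_less: "digit p d k a < p" if "a < p ^ d" "k < d"
  using that by (cases "p = 0") (auto simp: digit_def power_0_left)

definition digit_word :: "(nat \<Rightarrow> complex mat) \<Rightarrow> nat \<Rightarrow> nat \<Rightarrow> nat \<Rightarrow> nat \<Rightarrow> complex mat" where
  "digit_word g n p d a = foldr (\<lambda>k M. g (digit p d k a) * M) [0..<d] (1\<^sub>m n)"

lemma digit_word_carrier:
  "a < p ^ d \<Longrightarrow> (\<And>m. m < p \<Longrightarrow> g m \<in> carrier_mat n n) \<Longrightarrow> digit_word g n p d a \<in> carrier_mat n n"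
  unfolding digit_word_def by (intro foldr_mult_carrier) (simp add: digit_less)

lemma conj_mat_digit_word:
  "a < p ^ d \<Longrightarrow> (\<And>m. m < p \<Longrightarrow> g m \<in> carrier_mat n n) \<Longrightarrow>
   conj_mat (digit_word g n p d a) = digit_word (\<lambda>m. conj_mat (g m)) n p d a"
  unfolding digit_word_def by (intro conj_mat_foldr_mult) (simp add: digit_less)

lemma digit_word_Suc:
  assumes a: "a < p ^ Suc d" and g: "\<And>m. m < p \<Longrightarrow> g m \<in> carrier_mat n n"
  shows "digit_word g n p (Suc d) a = digit_word g n p d (a div p) * g (a mod p)"
proof -
  have p: "0 < p" using a by (cases "p = 0") auto
  have a': "a div p < p ^ d" using a p by (simp add: div_less_iff_less_mult mult.commute)
  have "digit p (Suc d) k a = digit p d k (a div p)" if "k < d" for k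
  proof -
    have "p ^ (d - k) = p * p ^ (d - Suc k)"
      using that by (simp add: Suc_diff_Suc flip: power_Suc)
    then show ?thesis by (simp add: digit_def div_mult2_eq)
  qed
  then have "digit_word g n p (Suc d) a = foldr (\<lambda>k M. g (digit p d k (a div p)) * M) [0..<d] (g (a mod p) * 1\<^sub>m n)"
    unfolding digit_word_def by (simp add: digit_def[of p "Suc d" d]) (intro foldr_cong, auto)
  also have "\<dots> = digit_word g n p d (a div p) * (g (a mod p) * 1\<^sub>m n)"
    unfolding digit_word_def using g p a'
    by (intro foldr_mult_eq_mult[where m=n]) (auto simp: digit_less intro!: mult_carrier_mat)
  also have "\<dots> = digit_word g n p d (a div p) * g (a mod p)"
    using g[of "a mod p"] p by simp
  finally show ?thesis .
qed

lemma transfer_eq_kron_sum: "transfer D p A = kron_sum D D {..<p} (\<lambda>_. 1) (\<lambda>m. conj_mat (A m)) A"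
  unfolding transfer_def kron_sum_def by simp

lemma transfer_pow_eq_kron_sum:
  assumes A: "\<And>m. m < p \<Longrightarrow> A m \<in> carrier_mat D D"
  shows "transfer D p A ^\<^sub>m d
    = kron_sum D D {..<p ^ d} (\<lambda>_. 1) (digit_word (\<lambda>m. conj_mat (A m)) D p d) (digit_word A D p d)"
proof (induction d)
  case 0
  have "kron_sum D D {..<1::nat} (\<lambda>_. 1) (\<lambda>_. 1\<^sub>m D) (\<lambda>_. 1\<^sub>m D) = kron (1\<^sub>m D) (1\<^sub>m D)"
    unfolding kron_sum_def by (intro eq_matI) (auto simp: kron_def)
  then have "kron_sum D D {..<1::nat} (\<lambda>_. 1) (\<lambda>_. 1\<^sub>m D) (\<lambda>_. 1\<^sub>m D) = 1\<^sub>m (D * D)"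
    by (simp add: kron_one)
  then show ?case by (simp add: digit_word_def transfer_def)
next
  case (Suc d)
  have carriers: "\<And>m. m < p \<Longrightarrow> conj_mat (A m) \<in> carrier_mat D D"
    "\<And>a. a < p ^ d \<Longrightarrow> digit_word (\<lambda>m. conj_mat (A m)) D p d a \<in> carrier_mat D D"
    "\<And>a. a < p ^ d \<Longrightarrow> digit_word A D p d a \<in> carrier_mat D D"
    using A by (auto intro!: digit_word_carrier conj_mat_carrier)
  have "transfer D p A ^\<^sub>m Suc d = transfer D p A ^\<^sub>m d * transfer D p A"
    by simp
  also have "\<dots> = kron_sum D D {..<p ^ d} (\<lambda>_. 1) (digit_word (\<lambda>m. conj_mat (A m)) D p d) (digit_word A D p d)
      * kron_sum D D {..<p} (\<lambda>_. 1) (\<lambda>m. conj_mat (A m)) A"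
    by (simp only: Suc.IH, simp only: transfer_eq_kron_sum)
  also have "\<dots> = kron_sum D D ({..<p ^ d} \<times> {..<p}) (\<lambda>_. 1)
      (\<lambda>(q,r). digit_word (\<lambda>m. conj_mat (A m)) D p d q * conj_mat (A r)) (\<lambda>(q,r). digit_word A D p d q * A r)"
    using carriers A by (subst kron_sum_mult[where ?n1.0=D and ?n2.0=D]) (auto intro: kron_sum_cong)
  also have "\<dots> = kron_sum D D {..<p ^ Suc d} (\<lambda>_. 1)
      (digit_word (\<lambda>m. conj_mat (A m)) D p (Suc d)) (digit_word A D p (Suc d))"
    unfolding kron_sum_lessThan_times power_Suc2
  proof (intro kron_sum_cong)
    fix a assume "a \<in> {..<p ^ d * p}"
    then have a: "a < p ^ Suc d" by (simp add: mult.commute)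
    show "(case (a div p, a mod p) of (q, r) \<Rightarrow> digit_word (\<lambda>m. conj_mat (A m)) D p d q * conj_mat (A r))
      = digit_word (\<lambda>m. conj_mat (A m)) D p (Suc d) a"
      using digit_word_Suc[OF a, of "\<lambda>m. conj_mat (A m)"] A by (simp add: conj_mat_carrier)
    show "(case (a div p, a mod p) of (q, r) \<Rightarrow> digit_word A D p d q * A r) = digit_word A D p (Suc d) a"
      using digit_word_Suc[OF a, of A] A by simp
  qed simp
  finally show ?case .
qed

lemma transfer_pow_eq_kron_sum_conj:
  assumes A: "\<And>m. m < p \<Longrightarrow> A m \<in> carrier_mat D D"
  shows "transfer D p A ^\<^sub>m d = kron_sum D D {..<p ^ d} (\<lambda>_. 1)
      (digit_word (\<lambda>m. conj_mat (A m)) D p d) (\<lambda>a. conj_mat (digit_word (\<lambda>m. conj_mat (A m)) D p d a))"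
    and "transfer D p A ^\<^sub>m d = kron_sum D D {..<p ^ d} (\<lambda>_. 1)
      (\<lambda>a. conj_mat (digit_word A D p d a)) (digit_word A D p d)"
  using A by (subst transfer_pow_eq_kron_sum, assumption,
      auto intro!: kron_sum_cong simp: conj_mat_digit_word conj_mat_carrier)+

lemma E_Z_unit_mat:
  assumes "m < p" "m' < p" "A m \<in> carrier_mat D1 D1" "B m' \<in> carrier_mat D2 D2"
  shows "E_Z D1 D2 p A B (unit_mat p m m') = kron (conj_mat (A m)) (B m')"
proof -
  have "(\<Sum>x<p. \<Sum>y<p. unit_mat p m m' $$ (x,y) * f x y) = f m m'" for f :: "nat \<Rightarrow> nat \<Rightarrow> complex"
  proof -
    have "(\<Sum>x<p. \<Sum>y<p. unit_mat p m m' $$ (x,y) * f x y) = (\<Sum>x<p. \<Sum>y<p. if x = m then if y = m' then f x y else 0 else 0)"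
      by (intro sum.cong refl) (simp add: unit_mat_def)
    also have "\<dots> = (\<Sum>x<p. if x = m then f x m' else 0)"
      using assms by (intro sum.cong refl) auto
    finally show ?thesis using assms by simp
  qed
  then show ?thesis
    unfolding E_Z_def using assms by (intro eq_matI) (auto simp: kron_def conj_mat_def)
qed

lemma E_list_unit_mats:
  assumes a: "a < p ^ d" and b: "b < p ^ d"
    and A: "\<And>m. m < p \<Longrightarrow> A m \<in> carrier_mat D1 D1" and B: "\<And>m. m < p \<Longrightarrow> B m \<in> carrier_mat D2 D2"
  shows "E_list D1 D2 p A B (map (\<lambda>k. unit_mat p (digit p d k a) (digit p d k b)) [0..<d])
     = kron (digit_word (\<lambda>m. conj_mat (A m)) D1 p d a) (digit_word B D2 p d b)"
proof -
  have "E_list D1 D2 p A B (map (\<lambda>k. unit_mat p (digit p d k a) (digit p d k b)) [0..<d])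
      = foldr (\<lambda>k M. kron (conj_mat (A (digit p d k a))) (B (digit p d k b)) * M) [0..<d] (1\<^sub>m (D1 * D2))"
    unfolding E_list_def foldr_map by (intro foldr_cong) (simp_all add: E_Z_unit_mat digit_less a b A B)
  also have "\<dots> = kron (digit_word (\<lambda>m. conj_mat (A m)) D1 p d a) (digit_word B D2 p d b)"
    unfolding digit_word_def by (rule foldr_mult_kron) (auto simp: digit_less a b A B conj_mat_carrier)
  finally show ?thesis .
qed

lemma E_F_eq_kron_sum:
  assumes A: "\<And>m. m < p \<Longrightarrow> A m \<in> carrier_mat D1 D1" and B: "\<And>m. m < p \<Longrightarrow> B m \<in> carrier_mat D2 D2"
  shows "E_F D1 D2 p d A B F = kron_sum D1 D2 ({..<p ^ d} \<times> {..<p ^ d}) (\<lambda>(a,b). F $$ (a,b))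
      (\<lambda>(a,b). digit_word (\<lambda>m. conj_mat (A m)) D1 p d a) (\<lambda>(a,b). digit_word B D2 p d b)"
  unfolding E_F_def kron_sum_def sum.cartesian_product'
  by (intro cong_mat refl) (auto intro!: sum.cong simp: E_list_unit_mats[OF _ _ A B])

subsection \<open>A bilinear Cauchy--Schwarz estimate\<close>

lemma sum_cmod_sq_mult_cnj_le_opnorm:
  assumes F: "F \<in> carrier_mat N N"
  shows "(\<Sum>a<N. (cmod (\<Sum>k<N. cnj (F $$ (a,k)) * f k))\<^sup>2) \<le> (opnorm F)\<^sup>2 * (\<Sum>k<N. (cmod (f k))\<^sup>2)"
proof -
  have "(\<Sum>a<N. (cmod (\<Sum>k<N. cnj (F $$ (a,k)) * f k))\<^sup>2) = (\<Sum>a<N. (cmod (\<Sum>k<N. conj_mat F $$ (a,k) * f k))\<^sup>2)"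
    using F by (intro sum.cong refl) (simp add: index_conj_mat)
  also have "\<dots> \<le> (opnorm F)\<^sup>2 * (\<Sum>k<N. (cmod (f k))\<^sup>2)"
    using sum_cmod_sq_mult_le_opnorm[OF conj_mat_carrier[OF F]] by (simp add: opnorm_conj_mat)
  finally show ?thesis .
qed

lemma sum_swap_pairs:
  "(\<Sum>i\<in>I. \<Sum>j\<in>J. \<Sum>a\<in>A. \<Sum>b\<in>B. f i j a b) = (\<Sum>a\<in>A. \<Sum>b\<in>B. \<Sum>i\<in>I. \<Sum>j\<in>J. f i j a b)"
proof -
  have "(\<Sum>i\<in>I. \<Sum>j\<in>J. \<Sum>a\<in>A. \<Sum>b\<in>B. f i j a b) = (\<Sum>i\<in>I. \<Sum>a\<in>A. \<Sum>b\<in>B. \<Sum>j\<in>J. f i j a b)"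
    by (intro sum.cong refl) (subst sum.swap, intro sum.cong refl sum.swap)
  also have "\<dots> = (\<Sum>a\<in>A. \<Sum>b\<in>B. \<Sum>i\<in>I. \<Sum>j\<in>J. f i j a b)"
    by (subst sum.swap) (intro sum.cong refl sum.swap)
  finally show ?thesis .
qed

definition gram :: "nat \<Rightarrow> ('s \<Rightarrow> nat \<Rightarrow> complex) \<Rightarrow> 's \<Rightarrow> 's \<Rightarrow> complex" where
  "gram n u a a' = (\<Sum>i<n. cnj (u a i) * u a' i)"

(* the n \<times> n matrix \<Sum>s\<in>S. u s \<otimes> conj (u s), flattened like kron_vec *)
definition outer_sum :: "'s set \<Rightarrow> nat \<Rightarrow> ('s \<Rightarrow> nat \<Rightarrow> complex) \<Rightarrow> complex vec" where
  "outer_sum S n u = vec (n * n) (\<lambda>k. \<Sum>s\<in>S. u s (k div n) * cnj (u s (k mod n)))"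

lemma sum_cmod_sq_eq_sum_gram_mult:
  "complex_of_real (\<Sum>i<n1. \<Sum>j<n2. (cmod (\<Sum>a\<in>S. u a i * v a j))\<^sup>2)
     = (\<Sum>a\<in>S. \<Sum>a'\<in>S. gram n1 u a a' * gram n2 v a a')"
proof -
  have "complex_of_real (\<Sum>i<n1. \<Sum>j<n2. (cmod (\<Sum>a\<in>S. u a i * v a j))\<^sup>2)
     = (\<Sum>i<n1. \<Sum>j<n2. \<Sum>a\<in>S. \<Sum>a'\<in>S. (cnj (u a' i) * u a i) * (cnj (v a' j) * v a j))"
    unfolding of_real_sum complex_norm_square
    by (intro sum.cong refl) (simp only: cnj_sum sum_product, simp add: mult_ac)
  also have "\<dots> = (\<Sum>a\<in>S. \<Sum>a'\<in>S. \<Sum>i<n1. \<Sum>j<n2. (cnj (u a' i) * u a i) * (cnj (v a' j) * v a j))"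
    by (rule sum_swap_pairs)
  also have "\<dots> = (\<Sum>a\<in>S. \<Sum>a'\<in>S. gram n1 u a' a * gram n2 v a' a)"
    by (simp only: gram_def sum_product)
  also have "\<dots> = (\<Sum>a\<in>S. \<Sum>a'\<in>S. gram n1 u a a' * gram n2 v a a')"
    by (rule sum.swap)
  finally show ?thesis .
qed

lemma gram_mult:
  "gram n (\<lambda>a j. \<Sum>b\<in>T. F a b * w b j) a a' = (\<Sum>b\<in>T. cnj (F a b) * (\<Sum>b'\<in>T. F a' b' * gram n w b b'))"
proof -
  have "gram n (\<lambda>a j. \<Sum>b\<in>T. F a b * w b j) a a'
      = (\<Sum>j<n. \<Sum>b\<in>T. \<Sum>b'\<in>T. cnj (F a b) * F a' b' * (cnj (w b j) * w b' j))"
    unfolding gram_def by (intro sum.cong refl) (simp only: cnj_sum sum_product, simp add: mult_ac)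
  also have "\<dots> = (\<Sum>b\<in>T. \<Sum>b'\<in>T. \<Sum>j<n. cnj (F a b) * F a' b' * (cnj (w b j) * w b' j))"
    by (subst sum.swap) (intro sum.cong refl sum.swap)
  finally show ?thesis
    by (simp add: gram_def sum_distrib_left mult_ac)
qed

lemma sum_cmod_sq_gram:
  "(\<Sum>a\<in>S. \<Sum>a'\<in>S. (cmod (gram n u a a'))\<^sup>2) = (vnorm (outer_sum S n u))\<^sup>2"
proof -
  have "complex_of_real (\<Sum>a\<in>S. \<Sum>a'\<in>S. (cmod (gram n u a a'))\<^sup>2)
     = (\<Sum>a\<in>S. \<Sum>a'\<in>S. \<Sum>i<n. \<Sum>i'<n. (u a i' * cnj (u a i)) * (cnj (u a' i') * u a' i))"
    unfolding of_real_sum complex_norm_square gram_def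
    by (intro sum.cong refl) (simp only: cnj_sum sum_product, simp add: mult_ac)
  also have "\<dots> = complex_of_real (\<Sum>i<n. \<Sum>i'<n. (cmod (\<Sum>a\<in>S. u a i' * cnj (u a i)))\<^sup>2)"
    unfolding of_real_sum complex_norm_square
    by (subst sum_swap_pairs) (intro sum.cong refl, simp only: cnj_sum sum_product, simp add: mult_ac)
  also have "\<dots> = complex_of_real (\<Sum>i<n. \<Sum>i'<n. (cmod (\<Sum>a\<in>S. u a i * cnj (u a i')))\<^sup>2)"
    by (subst sum.swap) (rule refl)
  finally show ?thesis
    unfolding outer_sum_def vnorm_vec_divmod_sq[where f="\<lambda>i i'. \<Sum>a\<in>S. u a i * cnj (u a i')"]
    by (simp only: of_real_eq_iff)
qed

lemma sum_cmod_sq_congruence_le: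
  assumes F: "F \<in> carrier_mat N N"
  shows "(\<Sum>a<N. \<Sum>a'<N. (cmod (\<Sum>b<N. cnj (F $$ (a,b)) * (\<Sum>b'<N. F $$ (a',b') * K b b')))\<^sup>2)
    \<le> ((opnorm F)\<^sup>2)\<^sup>2 * (\<Sum>b<N. \<Sum>b'<N. (cmod (K b b'))\<^sup>2)"
proof -
  define C where "C a' b = (\<Sum>b'<N. F $$ (a',b') * K b b')" for a' b
  have "(\<Sum>a<N. \<Sum>a'<N. (cmod (\<Sum>b<N. cnj (F $$ (a,b)) * C a' b))\<^sup>2)
      = (\<Sum>a'<N. \<Sum>a<N. (cmod (\<Sum>b<N. cnj (F $$ (a,b)) * C a' b))\<^sup>2)"
    by (rule sum.swap)
  also have "\<dots> \<le> (\<Sum>a'<N. (opnorm F)\<^sup>2 * (\<Sum>b<N. (cmod (C a' b))\<^sup>2))"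
    by (intro sum_mono sum_cmod_sq_mult_cnj_le_opnorm[OF F])
  also have "\<dots> = (opnorm F)\<^sup>2 * (\<Sum>b<N. \<Sum>a'<N. (cmod (\<Sum>b'<N. F $$ (a',b') * K b b'))\<^sup>2)"
    unfolding sum_distrib_left[symmetric] C_def by (subst sum.swap) (rule refl)
  also have "\<dots> \<le> (opnorm F)\<^sup>2 * (\<Sum>b<N. (opnorm F)\<^sup>2 * (\<Sum>b'<N. (cmod (K b b'))\<^sup>2))"
    by (intro mult_left_mono sum_mono sum_cmod_sq_mult_le_opnorm[OF F]) simp
  also have "\<dots> = ((opnorm F)\<^sup>2)\<^sup>2 * (\<Sum>b<N. \<Sum>b'<N. (cmod (K b b'))\<^sup>2)"
    by (simp add: sum_distrib_left power2_eq_square mult_ac)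
  finally show ?thesis
    unfolding C_def .
qed

lemma vnorm_bilinear_le:
  fixes u w :: "nat \<Rightarrow> nat \<Rightarrow> complex"
  assumes F: "F \<in> carrier_mat N N"
  shows "vnorm (vec (n1 * n2) (\<lambda>k. \<Sum>a<N. \<Sum>b<N. F $$ (a,b) * u a (k div n2) * w b (k mod n2)))
    \<le> opnorm F * sqrt (vnorm (outer_sum {..<N} n1 u) * vnorm (outer_sum {..<N} n2 w))"
    (is "vnorm ?V \<le> _")
proof -
  define P where "P a j = (\<Sum>b<N. F $$ (a,b) * w b j)" for a j
  define L where "L = (\<Sum>i<n1. \<Sum>j<n2. (cmod (\<Sum>a<N. u a i * P a j))\<^sup>2)"
  have V: "(vnorm ?V)\<^sup>2 = L"
    unfolding vnorm_vec_divmod_sq[where f="\<lambda>i j. \<Sum>a<N. \<Sum>b<N. F $$ (a,b) * u a i * w b j"] L_def P_def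
    by (simp add: sum_distrib_left mult_ac)
  have "0 \<le> L"
    unfolding L_def by (simp add: sum_nonneg)
  then have "L = cmod (complex_of_real L)"
    by (simp only: norm_of_real abs_of_nonneg)
  also have "\<dots> = cmod (\<Sum>a<N. \<Sum>a'<N. gram n1 u a a' * gram n2 P a a')"
    unfolding L_def by (simp only: sum_cmod_sq_eq_sum_gram_mult)
  also have "\<dots> \<le> sqrt (\<Sum>a<N. \<Sum>a'<N. (cmod (gram n1 u a a'))\<^sup>2) * sqrt (\<Sum>a<N. \<Sum>a'<N. (cmod (gram n2 P a a'))\<^sup>2)"
    by (rule cmod_double_sum_mult_le)
  also have "\<dots> \<le> vnorm (outer_sum {..<N} n1 u) * ((opnorm F)\<^sup>2 * vnorm (outer_sum {..<N} n2 w))"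
  proof (intro mult_mono)
    show "sqrt (\<Sum>a<N. \<Sum>a'<N. (cmod (gram n1 u a a'))\<^sup>2) \<le> vnorm (outer_sum {..<N} n1 u)"
      by (simp add: sum_cmod_sq_gram vnorm_nonneg)
    have "(\<Sum>a<N. \<Sum>a'<N. (cmod (gram n2 P a a'))\<^sup>2) \<le> ((opnorm F)\<^sup>2 * vnorm (outer_sum {..<N} n2 w))\<^sup>2"
      using sum_cmod_sq_congruence_le[OF F, of "gram n2 w"]
      unfolding P_def gram_mult[where F="\<lambda>a b. F $$ (a,b)"]
      by (simp add: sum_cmod_sq_gram power_mult_distrib)
    then show "sqrt (\<Sum>a<N. \<Sum>a'<N. (cmod (gram n2 P a a'))\<^sup>2) \<le> (opnorm F)\<^sup>2 * vnorm (outer_sum {..<N} n2 w)"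
      by (simp add: real_sqrt_le_iff vnorm_nonneg real_le_lsqrt)
  qed (simp_all add: vnorm_nonneg sum_nonneg)
  finally have "(vnorm ?V)\<^sup>2 \<le> (opnorm F * sqrt (vnorm (outer_sum {..<N} n1 u) * vnorm (outer_sum {..<N} n2 w)))\<^sup>2"
    unfolding V by (simp add: power_mult_distrib vnorm_nonneg mult_ac)
  then show ?thesis
    by (rule power2_le_imp_le) (simp add: opnorm_nonneg vnorm_nonneg)
qed

lemma kron_sum_conj_mult_kron_vec:
  assumes X: "\<And>a. a < N \<Longrightarrow> X a \<in> carrier_mat n n" and x: "x \<in> carrier_vec n"
  shows "kron_sum n n {..<N} (\<lambda>_. 1) X (\<lambda>s. conj_mat (X s)) *\<^sub>v kron_vec x (conjugate x)
      = outer_sum {..<N} n (\<lambda>s i. (X s *\<^sub>v x) $ i)"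
    and "kron_sum n n {..<N} (\<lambda>_. 1) (\<lambda>s. conj_mat (X s)) X *\<^sub>v kron_vec (conjugate x) x
      = conjugate (outer_sum {..<N} n (\<lambda>s i. (X s *\<^sub>v x) $ i))"
proof -
  have conj: "(conj_mat (X s) *\<^sub>v conjugate x) $ i = cnj ((X s *\<^sub>v x) $ i)" if "s < N" "i < n" for s i
    using conj_mat_mult_vec_conjugate[OF X[OF that(1)] x] X[OF that(1)] that(2) by simp
  have "kron_sum n n {..<N} (\<lambda>_. 1) X (\<lambda>s. conj_mat (X s)) *\<^sub>v kron_vec x (conjugate x)
    = vec (n * n) (\<lambda>k. \<Sum>s<N. 1 * ((X s *\<^sub>v x) $ (k div n) * (conj_mat (X s) *\<^sub>v conjugate x) $ (k mod n)))"
    using X conj_mat_carrier[OF X] x by (intro kron_sum_mult_kron_vec) auto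
  then show "kron_sum n n {..<N} (\<lambda>_. 1) X (\<lambda>s. conj_mat (X s)) *\<^sub>v kron_vec x (conjugate x)
      = outer_sum {..<N} n (\<lambda>s i. (X s *\<^sub>v x) $ i)"
    unfolding outer_sum_def using divmod_less by (auto intro!: eq_vecI sum.cong simp: conj)
  have "kron_sum n n {..<N} (\<lambda>_. 1) (\<lambda>s. conj_mat (X s)) X *\<^sub>v kron_vec (conjugate x) x
    = vec (n * n) (\<lambda>k. \<Sum>s<N. 1 * ((conj_mat (X s) *\<^sub>v conjugate x) $ (k div n) * (X s *\<^sub>v x) $ (k mod n)))"
    using X conj_mat_carrier[OF X] x by (intro kron_sum_mult_kron_vec) auto
  then show "kron_sum n n {..<N} (\<lambda>_. 1) (\<lambda>s. conj_mat (X s)) X *\<^sub>v kron_vec (conjugate x) x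
      = conjugate (outer_sum {..<N} n (\<lambda>s i. (X s *\<^sub>v x) $ i))"
    unfolding outer_sum_def using divmod_less by (auto intro!: eq_vecI sum.cong simp: conj mult.commute)
qed

lemma vnorm_kron_sum_mult_kron_vec_le:
  assumes F: "F \<in> carrier_mat N N"
    and X: "\<And>a. a < N \<Longrightarrow> X a \<in> carrier_mat n1 n1" and Y: "\<And>b. b < N \<Longrightarrow> Y b \<in> carrier_mat n2 n2"
    and x: "x \<in> carrier_vec n1" and y: "y \<in> carrier_vec n2"
  shows "vnorm (kron_sum n1 n2 ({..<N} \<times> {..<N}) (\<lambda>(a,b). F $$ (a,b)) (\<lambda>(a,b). X a) (\<lambda>(a,b). Y b) *\<^sub>v kron_vec x y)
    \<le> opnorm F * sqrt (vnorm (kron_sum n1 n1 {..<N} (\<lambda>_. 1) X (\<lambda>a. conj_mat (X a)) *\<^sub>v kron_vec x (conjugate x))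
                     * vnorm (kron_sum n2 n2 {..<N} (\<lambda>_. 1) (\<lambda>b. conj_mat (Y b)) Y *\<^sub>v kron_vec (conjugate y) y))"
proof -
  have V: "kron_sum n1 n2 ({..<N} \<times> {..<N}) (\<lambda>(a,b). F $$ (a,b)) (\<lambda>(a,b). X a) (\<lambda>(a,b). Y b) *\<^sub>v kron_vec x y
    = vec (n1 * n2) (\<lambda>k. \<Sum>a<N. \<Sum>b<N. F $$ (a,b) * (X a *\<^sub>v x) $ (k div n2) * (Y b *\<^sub>v y) $ (k mod n2))"
    using X Y x y by (subst kron_sum_mult_kron_vec) (auto simp: sum.cartesian_product' mult.assoc)
  have T1: "kron_sum n1 n1 {..<N} (\<lambda>_. 1) X (\<lambda>a. conj_mat (X a)) *\<^sub>v kron_vec x (conjugate x)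
      = outer_sum {..<N} n1 (\<lambda>a i. (X a *\<^sub>v x) $ i)"
    by (rule kron_sum_conj_mult_kron_vec(1)[OF X x])
  have T2: "kron_sum n2 n2 {..<N} (\<lambda>_. 1) (\<lambda>b. conj_mat (Y b)) Y *\<^sub>v kron_vec (conjugate y) y
      = conjugate (outer_sum {..<N} n2 (\<lambda>b j. (Y b *\<^sub>v y) $ j))"
    by (rule kron_sum_conj_mult_kron_vec(2)[OF Y y])
  show ?thesis
    unfolding V T1 T2 vnorm_conjugate by (rule vnorm_bilinear_le[OF F])
qed

subsection \<open>The estimates for \<open>E_F\<close>\<close>

lemma vnorm_kron_vec_conjugate:
  assumes "\<psi> \<in> carrier_vec n" "vnorm \<psi> = 1"
  shows "vnorm (kron_vec \<psi> (conjugate \<psi>)) = 1" "vnorm (kron_vec (conjugate \<psi>) \<psi>) = 1"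
  using assms by (simp_all add: vnorm_kron_vec[of _ n _ n] vnorm_conjugate)

lemma sqrt_of_nat_le: "sqrt (real n) \<le> real n"
proof (cases "n = 0")
  case False
  then have "sqrt (real n) \<le> sqrt (real n * real n)"
    by (intro real_sqrt_le_mono) simp
  then show ?thesis by simp
qed simp

lemma frob_le_of_columns:
  assumes M: "M \<in> carrier_mat n n" and col: "\<And>j. j < n \<Longrightarrow> vnorm (M *\<^sub>v unit_vec n j) \<le> R"
  shows "frob M \<le> sqrt (real n) * R"
proof (cases "n = 0")
  case True
  then show ?thesis using M by (simp add: frob_def)
next
  case False
  then have R: "0 \<le> R" using col[of 0] vnorm_nonneg order_trans by blast
  have "(frob M)\<^sup>2 = (\<Sum>i<n. \<Sum>j<n. (cmod (M $$ (i,j)))\<^sup>2)"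
    using M unfolding frob_def by (simp add: sum_nonneg)
  also have "\<dots> = (\<Sum>j<n. \<Sum>i<n. (cmod (M $$ (i,j)))\<^sup>2)"
    by (rule sum.swap)
  also have "\<dots> = (\<Sum>j<n. (vnorm (M *\<^sub>v unit_vec n j))\<^sup>2)"
    using M by (intro sum.cong refl) (simp add: vnorm_sq index_mult_unit_vec del: index_mult_mat_vec)
  also have "\<dots> \<le> (\<Sum>j<n. R\<^sup>2)"
    by (intro sum_mono power_mono col vnorm_nonneg) simp
  also have "\<dots> = (sqrt (real n) * R)\<^sup>2"
    by (simp add: power_mult_distrib)
  finally show ?thesis
    by (rule power2_le_imp_le) (simp add: R)
qed

lemma vnorm_E_F_mult_kron_vec_le:
  assumes A: "\<And>m. m < p \<Longrightarrow> A m \<in> carrier_mat D1 D1" and B: "\<And>m. m < p \<Longrightarrow> B m \<in> carrier_mat D2 D2"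
    and \<psi>1: "\<psi>1 \<in> carrier_vec D1" "vnorm \<psi>1 = 1" and \<psi>2: "\<psi>2 \<in> carrier_vec D2" "vnorm \<psi>2 = 1"
    and F: "F \<in> carrier_mat (p ^ d) (p ^ d)"
  shows "vnorm (E_F D1 D2 p d A B F *\<^sub>v kron_vec \<psi>1 \<psi>2)
    \<le> opnorm F * sqrt (opnorm (transfer D1 p A ^\<^sub>m d) * opnorm (transfer D2 p B ^\<^sub>m d))"
proof -
  define W1 where "W1 = digit_word (\<lambda>m. conj_mat (A m)) D1 p d"
  define W2 where "W2 = digit_word B D2 p d"
  have EF: "E_F D1 D2 p d A B F
    = kron_sum D1 D2 ({..<p ^ d} \<times> {..<p ^ d}) (\<lambda>(a,b). F $$ (a,b)) (\<lambda>(a,b). W1 a) (\<lambda>(a,b). W2 b)"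
    unfolding W1_def W2_def by (rule E_F_eq_kron_sum) (simp_all add: A B)
  have T1: "transfer D1 p A ^\<^sub>m d = kron_sum D1 D1 {..<p ^ d} (\<lambda>_. 1) W1 (\<lambda>a. conj_mat (W1 a))"
    unfolding W1_def by (rule transfer_pow_eq_kron_sum_conj(1)) (rule A)
  have T2: "transfer D2 p B ^\<^sub>m d = kron_sum D2 D2 {..<p ^ d} (\<lambda>_. 1) (\<lambda>b. conj_mat (W2 b)) W2"
    unfolding W2_def by (rule transfer_pow_eq_kron_sum_conj(2)) (rule B)
  have "vnorm (E_F D1 D2 p d A B F *\<^sub>v kron_vec \<psi>1 \<psi>2)
    \<le> opnorm F * sqrt (vnorm (transfer D1 p A ^\<^sub>m d *\<^sub>v kron_vec \<psi>1 (conjugate \<psi>1))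
                     * vnorm (transfer D2 p B ^\<^sub>m d *\<^sub>v kron_vec (conjugate \<psi>2) \<psi>2))"
    unfolding EF T1 T2 using A B
    by (intro vnorm_kron_sum_mult_kron_vec_le F \<psi>1(1) \<psi>2(1))
      (auto simp: W1_def W2_def intro!: digit_word_carrier conj_mat_carrier)
  also have "\<dots> \<le> opnorm F * sqrt (opnorm (transfer D1 p A ^\<^sub>m d) * opnorm (transfer D2 p B ^\<^sub>m d))"
    using vnorm_mult_vec_le_opnorm[of "kron_vec \<psi>1 (conjugate \<psi>1)" "transfer D1 p A ^\<^sub>m d"]
      vnorm_mult_vec_le_opnorm[of "kron_vec (conjugate \<psi>2) \<psi>2" "transfer D2 p B ^\<^sub>m d"]
      vnorm_kron_vec_conjugate[OF \<psi>1] vnorm_kron_vec_conjugate[OF \<psi>2] \<psi>1(1) \<psi>2(1)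
    by (intro mult_left_mono real_sqrt_le_mono mult_mono)
      (auto simp: vnorm_nonneg opnorm_nonneg transfer_def kron_vec_carrier)
  finally show ?thesis .
qed

lemma vnorm_adjoint_E_F_mult_kron_vec_le:
  assumes A: "\<And>m. m < p \<Longrightarrow> A m \<in> carrier_mat D1 D1" and B: "\<And>m. m < p \<Longrightarrow> B m \<in> carrier_mat D2 D2"
    and \<psi>1: "\<psi>1 \<in> carrier_vec D1" "vnorm \<psi>1 = 1" and \<psi>2: "\<psi>2 \<in> carrier_vec D2" "vnorm \<psi>2 = 1"
    and F: "F \<in> carrier_mat (p ^ d) (p ^ d)"
  shows "vnorm (mat_adjoint (E_F D1 D2 p d A B F) *\<^sub>v kron_vec \<psi>1 \<psi>2)
    \<le> opnorm F * sqrt (opnorm (transfer D1 p A ^\<^sub>m d) * opnorm (transfer D2 p B ^\<^sub>m d))"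
proof -
  define W1 where "W1 = digit_word (\<lambda>m. conj_mat (A m)) D1 p d"
  define W2 where "W2 = digit_word B D2 p d"
  have W1: "\<And>a. a < p ^ d \<Longrightarrow> W1 a \<in> carrier_mat D1 D1" and W2: "\<And>b. b < p ^ d \<Longrightarrow> W2 b \<in> carrier_mat D2 D2"
    unfolding W1_def W2_def using A B by (auto intro!: digit_word_carrier conj_mat_carrier)
  have "mat_adjoint (E_F D1 D2 p d A B F)
    = mat_adjoint (kron_sum D1 D2 ({..<p ^ d} \<times> {..<p ^ d}) (\<lambda>(a,b). F $$ (a,b)) (\<lambda>(a,b). W1 a) (\<lambda>(a,b). W2 b))"
    unfolding W1_def W2_def by (subst E_F_eq_kron_sum) (simp_all add: A B)
  also have "\<dots> = kron_sum D1 D2 ({..<p ^ d} \<times> {..<p ^ d}) (\<lambda>(a,b). conj_mat F $$ (a,b))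
      (\<lambda>(a,b). mat_adjoint (W1 a)) (\<lambda>(a,b). mat_adjoint (W2 b))"
    using W1 W2 F by (subst mat_adjoint_kron_sum) (auto intro!: kron_sum_cong simp: index_conj_mat)
  finally have EF: "mat_adjoint (E_F D1 D2 p d A B F) = \<dots>" .
  have "transfer D1 p A ^\<^sub>m d = kron_sum D1 D1 {..<p ^ d} (\<lambda>_. 1) W1 (\<lambda>a. conj_mat (W1 a))"
    unfolding W1_def by (rule transfer_pow_eq_kron_sum_conj(1)) (rule A)
  then have T1: "mat_adjoint (transfer D1 p A ^\<^sub>m d)
    = kron_sum D1 D1 {..<p ^ d} (\<lambda>_. 1) (\<lambda>a. mat_adjoint (W1 a)) (\<lambda>a. conj_mat (mat_adjoint (W1 a)))"
    using W1 by (simp, subst mat_adjoint_kron_sum)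
      (auto intro!: kron_sum_cong conj_mat_carrier simp: conj_mat_adjoint W1)
  have "transfer D2 p B ^\<^sub>m d = kron_sum D2 D2 {..<p ^ d} (\<lambda>_. 1) (\<lambda>b. conj_mat (W2 b)) W2"
    unfolding W2_def by (rule transfer_pow_eq_kron_sum_conj(2)) (rule B)
  then have T2: "mat_adjoint (transfer D2 p B ^\<^sub>m d)
    = kron_sum D2 D2 {..<p ^ d} (\<lambda>_. 1) (\<lambda>b. conj_mat (mat_adjoint (W2 b))) (\<lambda>b. mat_adjoint (W2 b))"
    using W2 by (simp, subst mat_adjoint_kron_sum)
      (auto intro!: kron_sum_cong conj_mat_carrier simp: conj_mat_adjoint W2)
  have "vnorm (mat_adjoint (E_F D1 D2 p d A B F) *\<^sub>v kron_vec \<psi>1 \<psi>2)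
    \<le> opnorm (conj_mat F) * sqrt (vnorm (mat_adjoint (transfer D1 p A ^\<^sub>m d) *\<^sub>v kron_vec \<psi>1 (conjugate \<psi>1))
                     * vnorm (mat_adjoint (transfer D2 p B ^\<^sub>m d) *\<^sub>v kron_vec (conjugate \<psi>2) \<psi>2))"
    unfolding EF T1 T2 using W1 W2 F
    by (intro vnorm_kron_sum_mult_kron_vec_le \<psi>1(1) \<psi>2(1)) (auto intro: mat_adjoint_carrier conj_mat_carrier)
  also have "\<dots> \<le> opnorm F * sqrt (opnorm (transfer D1 p A ^\<^sub>m d) * opnorm (transfer D2 p B ^\<^sub>m d))"
    unfolding opnorm_conj_mat
    using vnorm_adjoint_mult_vec_le_opnorm[of "transfer D1 p A ^\<^sub>m d" "D1 * D1" "kron_vec \<psi>1 (conjugate \<psi>1)"]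
      vnorm_adjoint_mult_vec_le_opnorm[of "transfer D2 p B ^\<^sub>m d" "D2 * D2" "kron_vec (conjugate \<psi>2) \<psi>2"]
      vnorm_kron_vec_conjugate[OF \<psi>1] vnorm_kron_vec_conjugate[OF \<psi>2] \<psi>1(1) \<psi>2(1)
    by (intro mult_left_mono real_sqrt_le_mono mult_mono)
      (auto simp: vnorm_nonneg opnorm_nonneg transfer_def kron_vec_carrier)
  finally show ?thesis .
qed

lemma frob_E_F_le:
  assumes A: "\<And>m. m < p \<Longrightarrow> A m \<in> carrier_mat D1 D1" and B: "\<And>m. m < p \<Longrightarrow> B m \<in> carrier_mat D2 D2"
    and F: "F \<in> carrier_mat (p ^ d) (p ^ d)"
  shows "frob (E_F D1 D2 p d A B F)
    \<le> real (D1 * D2) * opnorm F * sqrt (opnorm (transfer D1 p A ^\<^sub>m d) * opnorm (transfer D2 p B ^\<^sub>m d))"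
proof -
  define R where "R = opnorm F * sqrt (opnorm (transfer D1 p A ^\<^sub>m d) * opnorm (transfer D2 p B ^\<^sub>m d))"
  have R: "0 \<le> R" unfolding R_def by (simp add: opnorm_nonneg)
  have "vnorm (E_F D1 D2 p d A B F *\<^sub>v unit_vec (D1 * D2) j) \<le> R" if "j < D1 * D2" for j
    unfolding unit_vec_eq_kron_vec[OF that] R_def using divmod_less[OF that]
    by (intro vnorm_E_F_mult_kron_vec_le A B F) (auto simp: vnorm_unit_vec)
  then have "frob (E_F D1 D2 p d A B F) \<le> sqrt (real (D1 * D2)) * R"
    by (intro frob_le_of_columns) (simp_all add: E_F_def)
  also have "\<dots> \<le> real (D1 * D2) * R"
    using R by (intro mult_right_mono sqrt_of_nat_le)
  finally show ?thesis
    unfolding R_def by (simp add: mult.assoc)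
qed

theorem lemma6:
  fixes D1 D2 p d :: nat
    and A B :: "nat \<Rightarrow> complex mat"
    and \<psi>1 \<psi>2 :: "complex vec"
    and F :: "complex mat"
  assumes hA: "\<And>m. m < p \<Longrightarrow> A m \<in> carrier_mat D1 D1"
    and hB: "\<And>m. m < p \<Longrightarrow> B m \<in> carrier_mat D2 D2"
    and h\<psi>1: "\<psi>1 \<in> carrier_vec D1" "vnorm \<psi>1 = 1"
    and h\<psi>2: "\<psi>2 \<in> carrier_vec D2" "vnorm \<psi>2 = 1"
    and hd: "d \<ge> 1"
    and hF: "F \<in> carrier_mat (p ^ d) (p ^ d)"
  shows "(vnorm (mat_adjoint (E_F D1 D2 p d A B F) *\<^sub>v kron_vec \<psi>1 \<psi>2)
           \<le> opnorm F * sqrt (opnorm (transfer D1 p A ^\<^sub>m d) * opnorm (transfer D2 p B ^\<^sub>m d))) \<and>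
         (vnorm (E_F D1 D2 p d A B F *\<^sub>v kron_vec \<psi>1 \<psi>2)
           \<le> opnorm F * sqrt (opnorm (transfer D1 p A ^\<^sub>m d) * opnorm (transfer D2 p B ^\<^sub>m d))) \<and>
         (frob (E_F D1 D2 p d A B F)
           \<le> real (D1 * D2) * opnorm F * sqrt (opnorm (transfer D1 p A ^\<^sub>m d) * opnorm (transfer D2 p B ^\<^sub>m d)))"
  by (intro conjI vnorm_adjoint_E_F_mult_kron_vec_le vnorm_E_F_mult_kron_vec_le frob_E_F_le)
    (use hA hB h\<psi>1 h\<psi>2 hF in auto)

end
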